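(* Let $\mathcal X$ be an instance space and let $\mathcal H$ be a class of classifiers $\mathcal X\to\{0,1\}$ of finite VC dimension. Consider two disjoint demographic groups $A$ and $B$ (group membership is observed), a group-$B$ proportion $r\in(0,1)$, distributions $\mathcal D_A,\mathcal D_B$ on $\mathcal X$, and classifiers $h_A^*,h_B^*\in\mathcal H$ such that $$p:=\Pr_{x\sim\mathcal D_A}[h_A^*(x)=1]=\Pr_{x\sim\mathcal D_B}[h_B^*(x)=1],\qquad p\in(0,1].$$ Let $\eta\in[0,1/2)$, $\beta_{POS},\beta_{NEG}\in(0,1]$, $\nu\in[0,1)$, and let the true and biased distributions be as described in the context. Assume $$(1-r)(1-2\eta)+r\big((1-\eta)\beta_{POS}(1-2\nu)-\eta\beta_{NEG}\big)>0$$ and $$(1-r)(1-2\eta)+r\big((1-\eta)\beta_{NEG}-(1-2\nu)\beta_{POS}\,\eta\big)>0.$$ Then $h^*=(h_A^*,h_B^* )$ satisfies Equal Opportunity on the biased distribution and has the lowest biased error among all pairs of classifiers $(h_A,h_B)$ satisfying Equal Opportunity on the biased distribution; thus $h^*$ is recovered by Equal-Opportunity-constrained ERM on the biased distribution.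
   Context: True distribution: an example is generated by first drawing the group, $B$ with probability $r$ and $A$ with probability $1-r$; then $x\sim\mathcal D_B$ (resp. $\mathcal D_A$); then, writing $h^*(x)=h_g^*(x)$ for the group $g$ of $x$, the true label is $y=1-h^*(x)$ with probability $\eta$ and $y=h^*(x)$ otherwise, independently. Biased distribution: starting from a true example $(x,y)$, if $x\in B$ and $y=1$ the example is kept with probability $\beta_{POS}$ (discarded otherwise), if $x\in B$ and $y=0$ it is kept with probability $\beta_{NEG}$, and examples of group $A$ are always kept; then each kept example with $x\in B$ and $y=1$ has its label flipped to $0$ independently with probability $\nu$. The biased distribution is the distribution of the kept examples with their (possibly flipped) observed labels. A classifier is a pair $h=(h_A,h_B)$ of functions $\mathcal X\to\{0,1\}$, predicting $h_g(x)$ on an example of group $g$. Its biased error is the probability, under the biased distribution, that its prediction differs from the observed label. $h$ satisfies Equal Opportunity on a distribution if $\Pr[h_A(x)=1\mid y=1,x\in A]=\Pr[h_B(x)=1\mid y=1,x\in B]$ under that distribution (with $y$ the label in that distribution). *)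

theory Defs
  imports "HOL-Probability.Probability"
begin

text \<open>Groups. Labels are booleans (True = 1, False = 0).\<close>
datatype grp = GA | GB

definition shatters :: "('a \<Rightarrow> bool) set \<Rightarrow> 'a set \<Rightarrow> bool" where
  "shatters H S \<longleftrightarrow> (\<forall>T \<subseteq> S. \<exists>h \<in> H. \<forall>x \<in> S. (h x \<longleftrightarrow> x \<in> T))"

definition finite_VC_dim :: "('a \<Rightarrow> bool) set \<Rightarrow> bool" where
  "finite_VC_dim H \<longleftrightarrow> (\<exists>d::nat. \<forall>S. finite S \<and> shatters H S \<longrightarrow> card S \<le> d)"

definition true_label_prob :: "real \<Rightarrow> bool \<Rightarrow> bool \<Rightarrow> real" where
  "true_label_prob eta hx y = (if y = hx then 1 - eta else eta)"

text \<open>Unnormalised mass, under the biased process, of the event E on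
  (group, x, observed label). Group A (prob 1-r): x ~ DA, true label noisy, always kept.
  Group B (prob r): x ~ DB, true label noisy; kept w.p. bpos (label 1) / bneg (label 0);
  a kept label 1 is flipped to 0 w.p. nu.\<close>
definition biased_mass ::
  "real \<Rightarrow> real \<Rightarrow> real \<Rightarrow> real \<Rightarrow> real \<Rightarrow> 'a measure \<Rightarrow> 'a measure \<Rightarrow>
   ('a \<Rightarrow> bool) \<Rightarrow> ('a \<Rightarrow> bool) \<Rightarrow> (grp \<Rightarrow> 'a \<Rightarrow> bool \<Rightarrow> bool) \<Rightarrow> real" where
  "biased_mass r eta bpos bneg nu DA DB hsA hsB E =
     (1 - r) * (\<integral>x. (\<Sum>y\<in>UNIV. true_label_prob eta (hsA x) y * of_bool (E GA x y)) \<partial>DA)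
   + r * (\<integral>x. true_label_prob eta (hsB x) True * bpos *
                 ((1 - nu) * of_bool (E GB x True) + nu * of_bool (E GB x False))
             + true_label_prob eta (hsB x) False * bneg * of_bool (E GB x False) \<partial>DB)"

definition biased_prob ::
  "real \<Rightarrow> real \<Rightarrow> real \<Rightarrow> real \<Rightarrow> real \<Rightarrow> 'a measure \<Rightarrow> 'a measure \<Rightarrow>
   ('a \<Rightarrow> bool) \<Rightarrow> ('a \<Rightarrow> bool) \<Rightarrow> (grp \<Rightarrow> 'a \<Rightarrow> bool \<Rightarrow> bool) \<Rightarrow> real" where
  "biased_prob r eta bpos bneg nu DA DB hsA hsB E =
     biased_mass r eta bpos bneg nu DA DB hsA hsB E /
     biased_mass r eta bpos bneg nu DA DB hsA hsB (\<lambda>_ _ _. True)"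

definition pred :: "('a \<Rightarrow> bool) \<Rightarrow> ('a \<Rightarrow> bool) \<Rightarrow> grp \<Rightarrow> 'a \<Rightarrow> bool" where
  "pred hA hB g x = (case g of GA \<Rightarrow> hA x | GB \<Rightarrow> hB x)"

definition biased_error ::
  "real \<Rightarrow> real \<Rightarrow> real \<Rightarrow> real \<Rightarrow> real \<Rightarrow> 'a measure \<Rightarrow> 'a measure \<Rightarrow>
   ('a \<Rightarrow> bool) \<Rightarrow> ('a \<Rightarrow> bool) \<Rightarrow> ('a \<Rightarrow> bool) \<Rightarrow> ('a \<Rightarrow> bool) \<Rightarrow> real" where
  "biased_error r eta bpos bneg nu DA DB hsA hsB hA hB =
     biased_prob r eta bpos bneg nu DA DB hsA hsB (\<lambda>g x y. pred hA hB g x \<noteq> y)"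

definition EO_biased ::
  "real \<Rightarrow> real \<Rightarrow> real \<Rightarrow> real \<Rightarrow> real \<Rightarrow> 'a measure \<Rightarrow> 'a measure \<Rightarrow>
   ('a \<Rightarrow> bool) \<Rightarrow> ('a \<Rightarrow> bool) \<Rightarrow> ('a \<Rightarrow> bool) \<Rightarrow> ('a \<Rightarrow> bool) \<Rightarrow> bool" where
  "EO_biased r eta bpos bneg nu DA DB hsA hsB hA hB \<longleftrightarrow>
     biased_prob r eta bpos bneg nu DA DB hsA hsB (\<lambda>g x y. g = GA \<and> y \<and> hA x) /
       biased_prob r eta bpos bneg nu DA DB hsA hsB (\<lambda>g x y. g = GA \<and> y)
   = biased_prob r eta bpos bneg nu DA DB hsA hsB (\<lambda>g x y. g = GB \<and> y \<and> hB x) /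
       biased_prob r eta bpos bneg nu DA DB hsA hsB (\<lambda>g x y. g = GB \<and> y)"

end

theory Submission
  imports Defs
begin

text \<open>Under this bias model an example of group B carries the observed label 1 exactly
  when it is a kept, unflipped true positive, so conditioning on observed label 1 rescales
  group B by the constant bpos (1 - nu): Equal Opportunity on the biased distribution is Equal
  Opportunity on the true one. Since both groups have the same base rate, this is the linear
  constraint eta fpA - (1 - eta) fnA = eta fpB - (1 - eta) fnB on the masses of false negatives
  and false positives of hA, hB relative to the target pair h* = (hsA, hsB). The biased error
  of h exceeds that of h* by a linear form in these four masses. Minimising its group-A part
  for a fixed value D of the constraint leaves a function of (fnB, fpB) that is linear on each
  of the cones D \<le> 0 and D \<ge> 0; the two hypotheses on the parameters, together with
  bneg (1 - 2 eta) \<ge> 0, say that it is nonnegative on their three boundary rays.\<close>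

definition false_neg_prob :: "'a measure \<Rightarrow> ('a \<Rightarrow> bool) \<Rightarrow> ('a \<Rightarrow> bool) \<Rightarrow> real" where
  "false_neg_prob M hs h = measure M {x \<in> space M. hs x \<and> \<not> h x}"

definition false_pos_prob :: "'a measure \<Rightarrow> ('a \<Rightarrow> bool) \<Rightarrow> ('a \<Rightarrow> bool) \<Rightarrow> real" where
  "false_pos_prob M hs h = measure M {x \<in> space M. \<not> hs x \<and> h x}"

lemma integral_replace_classifier:
  fixes f :: "bool \<Rightarrow> bool \<Rightarrow> real"
  assumes M: "finite_measure M"
    and hs: "hs \<in> M \<rightarrow>\<^sub>M count_space UNIV" and h: "h \<in> M \<rightarrow>\<^sub>M count_space UNIV"
  shows "(\<integral>x. f (hs x) (h x) \<partial>M) = (\<integral>x. f (hs x) (hs x) \<partial>M)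
           + (f True False - f True True) * false_neg_prob M hs h
           + (f False True - f False False) * false_pos_prob M hs h"
proof -
  interpret finite_measure M by (fact M)
  have integrable: "integrable M (\<lambda>x. f (g x) (g' x))"
    if "g \<in> M \<rightarrow>\<^sub>M count_space UNIV" "g' \<in> M \<rightarrow>\<^sub>M count_space UNIV" for g g'
  proof (rule integrable_const_bound)
    define B where "B = \<bar>f True True\<bar> + \<bar>f True False\<bar> + \<bar>f False True\<bar> + \<bar>f False False\<bar>"
    have "\<bar>f a b\<bar> \<le> B" for a b
      unfolding B_def by (cases a; cases b) auto
    then show "AE x in M. norm (f (g x) (g' x)) \<le> B"
      by simp
    show "(\<lambda>x. f (g x) (g' x)) \<in> borel_measurable M"
      using that by measurable
  qed
  define FN where "FN = {x \<in> space M. hs x \<and> \<not> h x}"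
  define FP where "FP = {x \<in> space M. \<not> hs x \<and> h x}"
  have "FN \<in> sets M" "FP \<in> sets M"
    unfolding FN_def FP_def using hs h by measurable
  then have indicators:
      "integrable M (indicator FN :: _ \<Rightarrow> real)" "integrable M (indicator FP :: _ \<Rightarrow> real)"
    by (simp_all add: integrable_indicator_iff less_top[symmetric])
  have "(\<integral>x. f (hs x) (h x) \<partial>M) = (\<integral>x. f (hs x) (hs x)
          + (f True False - f True True) * indicator FN x
          + (f False True - f False False) * indicator FP x \<partial>M)"
    by (rule Bochner_Integration.integral_cong) (auto simp: FN_def FP_def indicator_def)
  also have "\<dots> = (\<integral>x. f (hs x) (hs x) \<partial>M)
           + (f True False - f True True) * measure M FN
           + (f False True - f False False) * measure M FP"
    using integrable[OF hs hs] indicators \<open>FN \<in> sets M\<close> \<open>FP \<in> sets M\<close> by simp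
  finally show ?thesis
    unfolding false_neg_prob_def false_pos_prob_def FN_def FP_def .
qed

lemma EO_excess_nonneg:
  fixes K c1 c2 eta fnA fpA fnB fpB :: real
  assumes K: "0 < K" "0 < K + c1" "0 < K + c2" and C: "0 \<le> c1 * eta + c2 * (1 - eta)"
    and eta: "0 \<le> eta" "eta < 1"
    and nonneg: "0 \<le> fnA" "0 \<le> fpA" "0 \<le> fnB" "0 \<le> fpB"
    and EO: "eta * fpA - (1 - eta) * fnA = eta * fpB - (1 - eta) * fnB"
  shows "0 \<le> K * (fnA + fpA) + c1 * fnB + c2 * fpB"
proof -
  \<comment> \<open>The sign of the common value D of the constraint decides whether it forces false
    negatives (D < 0) or false positives (D > 0) in group A.\<close>
  define D where "D = eta * fpB - (1 - eta) * fnB"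
  define E where "E = K * (fnA + fpA) + c1 * fnB + c2 * fpB"
  have "(1 - eta) * E = K * fpA - (K + c1) * D + fpB * (c1 * eta + c2 * (1 - eta))
      + K * (D - (eta * fpA - (1 - eta) * fnA))"
    and "eta * E = K * fnA + (K + c2) * D + fnB * (c1 * eta + c2 * (1 - eta))
      + K * ((eta * fpA - (1 - eta) * fnA) - D)"
    unfolding D_def E_def by (simp_all add: algebra_simps)
  then have identities:
      "(1 - eta) * E = K * fpA - (K + c1) * D + fpB * (c1 * eta + c2 * (1 - eta))"
      "eta * E = K * fnA + (K + c2) * D + fnB * (c1 * eta + c2 * (1 - eta))"
    using EO unfolding D_def by simp_all
  have C_fpB: "0 \<le> fpB * (c1 * eta + c2 * (1 - eta))"
    and C_fnB: "0 \<le> fnB * (c1 * eta + c2 * (1 - eta))"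
    using C nonneg by simp_all
  show ?thesis
  proof (cases "D \<le> 0")
    case True
    have "0 \<le> K * fpA" "(K + c1) * D \<le> 0"
      using K(1,2) nonneg(2) True by (simp_all add: mult_nonneg_nonpos)
    then have "0 \<le> (1 - eta) * E"
      using identities(1) C_fpB by linarith
    then show ?thesis using eta unfolding E_def by (simp add: zero_le_mult_iff)
  next
    case False
    have "0 \<le> (1 - eta) * fnB"
      using eta nonneg by simp
    then have "0 < eta * fpB"
      using False unfolding D_def by linarith
    then have "0 < eta"
      using eta(1) nonneg(4) by (simp add: zero_less_mult_iff)
    have "0 \<le> K * fnA" "0 \<le> (K + c2) * D"
      using K(1,3) nonneg(1) False by simp_all
    then have "0 \<le> eta * E"
      using identities(2) C_fnB by linarith
    then show ?thesis using \<open>0 < eta\<close> unfolding E_def by (simp add: zero_le_mult_iff)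
  qed
qed

lemma sum_true_label_prob: "(\<Sum>y\<in>UNIV. true_label_prob eta a y) = 1"
  by (simp add: true_label_prob_def UNIV_bool)

definition true_pos_mass :: "real \<Rightarrow> 'a measure \<Rightarrow> ('a \<Rightarrow> bool) \<Rightarrow> ('a \<Rightarrow> bool) \<Rightarrow> real" where
  "true_pos_mass eta M hs h = (\<integral>x. true_label_prob eta (hs x) True * of_bool (h x) \<partial>M)"

lemma true_pos_mass_target:
  assumes "finite_measure M" and hs: "hs \<in> M \<rightarrow>\<^sub>M count_space UNIV"
  shows "true_pos_mass eta M hs hs = (1 - eta) * measure M {x \<in> space M. hs x}"
proof -
  interpret finite_measure M by fact
  have "{x \<in> space M. hs x} \<in> sets M"
    using hs by measurable
  moreover have "true_pos_mass eta M hs hs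
      = (\<integral>x. (1 - eta) * indicator {x \<in> space M. hs x} x \<partial>M)"
    unfolding true_pos_mass_def
    by (rule Bochner_Integration.integral_cong) (auto simp: true_label_prob_def indicator_def)
  ultimately show ?thesis
    by simp
qed

lemma true_pos_mass_replace:
  assumes "finite_measure M"
    and "hs \<in> M \<rightarrow>\<^sub>M count_space UNIV" "h \<in> M \<rightarrow>\<^sub>M count_space UNIV"
  shows "true_pos_mass eta M hs h = true_pos_mass eta M hs hs
           - (1 - eta) * false_neg_prob M hs h + eta * false_pos_prob M hs h"
  using integral_replace_classifier[OF assms, of "\<lambda>a b. true_label_prob eta a True * of_bool b"]
  by (simp add: true_pos_mass_def true_label_prob_def algebra_simps)

lemma true_pos_mass_accept_all:
  assumes "prob_space M" and hs: "hs \<in> M \<rightarrow>\<^sub>M count_space UNIV"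
  shows "true_pos_mass eta M hs (\<lambda>_. True) = (1 - eta) * measure M {x \<in> space M. hs x}
           + eta * (1 - measure M {x \<in> space M. hs x})"
proof -
  interpret prob_space M by fact
  have "{x \<in> space M. hs x} \<in> sets M"
    using hs by measurable
  moreover have "space M - {x \<in> space M. hs x} = {x \<in> space M. \<not> hs x \<and> True}"
    by auto
  ultimately have "false_pos_prob M hs (\<lambda>_. True) = 1 - measure M {x \<in> space M. hs x}"
    unfolding false_pos_prob_def using prob_compl by metis
  then show ?thesis
    using true_pos_mass_replace[OF finite_measure_axioms hs, of "\<lambda>_. True"]
      true_pos_mass_target[OF finite_measure_axioms hs]
    by (simp add: false_neg_prob_def)
qed

locale biased_sampling =
  fixes r eta bpos bneg nu :: real and DA DB :: "'a measure" and hsA hsB :: "'a \<Rightarrow> bool"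
  assumes prob_space_A: "prob_space DA" and prob_space_B: "prob_space DB"
    and hsA_measurable: "hsA \<in> DA \<rightarrow>\<^sub>M count_space UNIV"
    and hsB_measurable: "hsB \<in> DB \<rightarrow>\<^sub>M count_space UNIV"
    and r_bounds: "0 < r" "r < 1"
    and eta_bounds: "0 \<le> eta" "eta < 1/2"
    and bpos_pos: "0 < bpos" and bneg_pos: "0 < bneg"
    and nu_bounds: "0 \<le> nu" "nu < 1"
    and base_rates_eq: "measure DA {x \<in> space DA. hsA x} = measure DB {x \<in> space DB. hsB x}"
    and base_rate_pos: "0 < measure DA {x \<in> space DA. hsA x}"
begin

lemmas finite_measure_A = prob_space.finite_measure[OF prob_space_A]
   and finite_measure_B = prob_space.finite_measure[OF prob_space_B]

abbreviation mass :: "(grp \<Rightarrow> 'a \<Rightarrow> bool \<Rightarrow> bool) \<Rightarrow> real" where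
  "mass \<equiv> biased_mass r eta bpos bneg nu DA DB hsA hsB"

lemma mass_total_pos: "0 < mass (\<lambda>_ _ _. True)"
proof -
  have "(\<integral>x. (\<Sum>y\<in>UNIV. true_label_prob eta (hsA x) y * of_bool True) \<partial>DA) = 1"
    using prob_space.prob_space[OF prob_space_A] by (simp add: sum_true_label_prob)
  moreover have "0 \<le> (\<integral>x. true_label_prob eta (hsB x) True * bpos
        * ((1 - nu) * of_bool True + nu * of_bool True)
      + true_label_prob eta (hsB x) False * bneg * of_bool True \<partial>DB)"
    using eta_bounds nu_bounds bpos_pos bneg_pos
    by (intro Bochner_Integration.integral_nonneg) (simp add: true_label_prob_def)
  ultimately show ?thesis
    unfolding biased_mass_def using r_bounds by (simp add: add_pos_nonneg)
qed

lemma mass_pos_label_A: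
  "mass (\<lambda>g x y. g = GA \<and> y \<and> h x) = (1 - r) * true_pos_mass eta DA hsA h"
proof -
  have "(\<Sum>y\<in>UNIV. true_label_prob eta a y * of_bool (y \<and> b))
      = true_label_prob eta a True * of_bool b" for a b
    by (cases b) (simp_all add: UNIV_bool)
  then show ?thesis
    unfolding biased_mass_def true_pos_mass_def by simp
qed

lemma mass_pos_label_B:
  "mass (\<lambda>g x y. g = GB \<and> y \<and> h x) = r * (bpos * (1 - nu)) * true_pos_mass eta DB hsB h"
proof -
  have "mass (\<lambda>g x y. g = GB \<and> y \<and> h x)
      = r * (\<integral>x. bpos * (1 - nu) * (true_label_prob eta (hsB x) True * of_bool (h x)) \<partial>DB)"
    unfolding biased_mass_def UNIV_bool by (simp add: mult_ac)
  then show ?thesis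
    unfolding true_pos_mass_def by simp
qed

lemma true_pos_mass_accept_all_eq_pos:
  "true_pos_mass eta DA hsA (\<lambda>_. True) = true_pos_mass eta DB hsB (\<lambda>_. True)"
  "0 < true_pos_mass eta DA hsA (\<lambda>_. True)"
proof -
  note formula = true_pos_mass_accept_all[OF prob_space_A hsA_measurable]
    true_pos_mass_accept_all[OF prob_space_B hsB_measurable]
  show "true_pos_mass eta DA hsA (\<lambda>_. True) = true_pos_mass eta DB hsB (\<lambda>_. True)"
    unfolding formula base_rates_eq ..
  have "measure DA {x \<in> space DA. hsA x} \<le> 1"
    using prob_space.prob_le_1[OF prob_space_A] .
  then show "0 < true_pos_mass eta DA hsA (\<lambda>_. True)"
    unfolding formula(1) using eta_bounds base_rate_pos
    by (intro add_pos_nonneg mult_pos_pos mult_nonneg_nonneg) simp_all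
qed

lemma EO_biased_iff_true_pos_mass_eq:
  "EO_biased r eta bpos bneg nu DA DB hsA hsB hA hB \<longleftrightarrow>
     true_pos_mass eta DA hsA hA = true_pos_mass eta DB hsB hB"
proof -
  have "1 - r \<noteq> 0" "r * (bpos * (1 - nu)) \<noteq> 0"
    using r_bounds bpos_pos nu_bounds by auto
  then show ?thesis
    using mass_total_pos true_pos_mass_accept_all_eq_pos
    unfolding EO_biased_def biased_prob_def mass_pos_label_A mass_pos_label_B
      mass_pos_label_A[of "\<lambda>_. True", simplified] mass_pos_label_B[of "\<lambda>_. True", simplified]
    by simp
qed

lemma EO_biased_target: "EO_biased r eta bpos bneg nu DA DB hsA hsB hsA hsB"
  unfolding EO_biased_iff_true_pos_mass_eq
  using true_pos_mass_target[OF finite_measure_A hsA_measurable]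
    true_pos_mass_target[OF finite_measure_B hsB_measurable]
  by (simp add: base_rates_eq)

lemma EO_biased_iff_error_rates:
  assumes "hA \<in> DA \<rightarrow>\<^sub>M count_space UNIV" "hB \<in> DB \<rightarrow>\<^sub>M count_space UNIV"
  shows "EO_biased r eta bpos bneg nu DA DB hsA hsB hA hB \<longleftrightarrow>
    eta * false_pos_prob DA hsA hA - (1 - eta) * false_neg_prob DA hsA hA =
    eta * false_pos_prob DB hsB hB - (1 - eta) * false_neg_prob DB hsB hB"
  using EO_biased_target
  unfolding EO_biased_iff_true_pos_mass_eq
    true_pos_mass_replace[OF finite_measure_A hsA_measurable assms(1)]
    true_pos_mass_replace[OF finite_measure_B hsB_measurable assms(2)]
  by linarith

lemma biased_error_excess_over_target:
  assumes hA: "hA \<in> DA \<rightarrow>\<^sub>M count_space UNIV" and hB: "hB \<in> DB \<rightarrow>\<^sub>M count_space UNIV"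
  shows "biased_error r eta bpos bneg nu DA DB hsA hsB hA hB
    = biased_error r eta bpos bneg nu DA DB hsA hsB hsA hsB
      + ((1 - r) * (1 - 2 * eta) * (false_neg_prob DA hsA hA + false_pos_prob DA hsA hA)
         + r * ((1 - eta) * bpos * (1 - 2 * nu) - eta * bneg) * false_neg_prob DB hsB hB
         + r * ((1 - eta) * bneg - eta * bpos * (1 - 2 * nu)) * false_pos_prob DB hsB hB)
        / mass (\<lambda>_ _ _. True)"
proof -
  define lossA where "lossA a b = true_label_prob eta a (\<not> b)" for a b
  define lossB where "lossB a b = true_label_prob eta a True * bpos *
      ((1 - nu) * of_bool (b \<noteq> True) + nu * of_bool (b \<noteq> False))
    + true_label_prob eta a False * bneg * of_bool (b \<noteq> False)" for a b
  have error_mass: "mass (\<lambda>g x y. pred h h' g x \<noteq> y)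
      = (1 - r) * (\<integral>x. lossA (hsA x) (h x) \<partial>DA) + r * (\<integral>x. lossB (hsB x) (h' x) \<partial>DB)" for h h'
  proof -
    have "(\<Sum>y\<in>UNIV. true_label_prob eta a y * of_bool (b \<noteq> y)) = lossA a b" for a b
      unfolding lossA_def by (cases b) (simp_all add: UNIV_bool)
    then show ?thesis
      unfolding biased_mass_def pred_def lossB_def by simp
  qed
  have replace_A: "(\<integral>x. lossA (hsA x) (hA x) \<partial>DA) = (\<integral>x. lossA (hsA x) (hsA x) \<partial>DA)
      + (1 - 2 * eta) * (false_neg_prob DA hsA hA + false_pos_prob DA hsA hA)"
    using integral_replace_classifier[OF finite_measure_A hsA_measurable hA, of lossA]
    by (simp add: lossA_def true_label_prob_def algebra_simps)
  have replace_B: "(\<integral>x. lossB (hsB x) (hB x) \<partial>DB) = (\<integral>x. lossB (hsB x) (hsB x) \<partial>DB)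
      + ((1 - eta) * bpos * (1 - 2 * nu) - eta * bneg) * false_neg_prob DB hsB hB
      + ((1 - eta) * bneg - eta * bpos * (1 - 2 * nu)) * false_pos_prob DB hsB hB"
    using integral_replace_classifier[OF finite_measure_B hsB_measurable hB, of lossB]
    by (simp add: lossB_def true_label_prob_def algebra_simps)
  have "mass (\<lambda>g x y. pred hA hB g x \<noteq> y) = mass (\<lambda>g x y. pred hsA hsB g x \<noteq> y)
      + ((1 - r) * (1 - 2 * eta) * (false_neg_prob DA hsA hA + false_pos_prob DA hsA hA)
         + r * ((1 - eta) * bpos * (1 - 2 * nu) - eta * bneg) * false_neg_prob DB hsB hB
         + r * ((1 - eta) * bneg - eta * bpos * (1 - 2 * nu)) * false_pos_prob DB hsB hB)"
    unfolding error_mass replace_A replace_B by (simp add: algebra_simps)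
  then show ?thesis
    unfolding biased_error_def biased_prob_def by (simp add: add_divide_distrib)
qed

theorem target_minimises_biased_error_under_EO:
  assumes cond1: "(1 - r) * (1 - 2 * eta) + r * ((1 - eta) * bpos * (1 - 2 * nu) - eta * bneg) > 0"
    and cond2: "(1 - r) * (1 - 2 * eta) + r * ((1 - eta) * bneg - (1 - 2 * nu) * bpos * eta) > 0"
    and hA: "hA \<in> DA \<rightarrow>\<^sub>M count_space UNIV" and hB: "hB \<in> DB \<rightarrow>\<^sub>M count_space UNIV"
    and EO: "EO_biased r eta bpos bneg nu DA DB hsA hsB hA hB"
  shows "biased_error r eta bpos bneg nu DA DB hsA hsB hsA hsB
    \<le> biased_error r eta bpos bneg nu DA DB hsA hsB hA hB"
proof -
  define K where "K = (1 - r) * (1 - 2 * eta)"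
  define c1 where "c1 = r * ((1 - eta) * bpos * (1 - 2 * nu) - eta * bneg)"
  define c2 where "c2 = r * ((1 - eta) * bneg - eta * bpos * (1 - 2 * nu))"
  have "0 \<le> K * (false_neg_prob DA hsA hA + false_pos_prob DA hsA hA)
      + c1 * false_neg_prob DB hsB hB + c2 * false_pos_prob DB hsB hB"
  proof (rule EO_excess_nonneg)
    show "0 < K"
      unfolding K_def using r_bounds eta_bounds by simp
    show "0 < K + c1" "0 < K + c2"
      unfolding K_def c1_def c2_def using cond1 cond2 by (simp_all add: algebra_simps)
    have "c1 * eta + c2 * (1 - eta) = r * bneg * (1 - 2 * eta)"
      unfolding c1_def c2_def by (simp add: algebra_simps)
    then show "0 \<le> c1 * eta + c2 * (1 - eta)"
      using r_bounds bneg_pos eta_bounds by simp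
    show "0 \<le> eta" "eta < 1"
      using eta_bounds by simp_all
    show "0 \<le> false_neg_prob DA hsA hA" "0 \<le> false_pos_prob DA hsA hA"
      "0 \<le> false_neg_prob DB hsB hB" "0 \<le> false_pos_prob DB hsB hB"
      by (simp_all add: false_neg_prob_def false_pos_prob_def)
    show "eta * false_pos_prob DA hsA hA - (1 - eta) * false_neg_prob DA hsA hA =
        eta * false_pos_prob DB hsB hB - (1 - eta) * false_neg_prob DB hsB hB"
      using EO EO_biased_iff_error_rates[OF hA hB] by simp
  qed
  then show ?thesis
    unfolding biased_error_excess_over_target[OF hA hB] K_def c1_def c2_def using mass_total_pos by simp
qed

end

theorem mainTheorem1:
  fixes H :: "('a \<Rightarrow> bool) set"
    and DA DB :: "'a measure"
    and hsA hsB :: "'a \<Rightarrow> bool"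
    and r eta bpos bneg nu :: real
  assumes VC: "finite_VC_dim H"
    and DA: "prob_space DA" and DB: "prob_space DB"
    and hsA_H: "hsA \<in> H" and hsB_H: "hsB \<in> H"
    and hsA_meas: "hsA \<in> measurable DA (count_space UNIV)"
    and hsB_meas: "hsB \<in> measurable DB (count_space UNIV)"
    and r: "0 < r" "r < 1"
    and p_eq: "measure DA {x \<in> space DA. hsA x} = measure DB {x \<in> space DB. hsB x}"
    and p_pos: "0 < measure DA {x \<in> space DA. hsA x}"
    and eta: "0 \<le> eta" "eta < 1/2"
    and bpos: "0 < bpos" "bpos \<le> 1"
    and bneg: "0 < bneg" "bneg \<le> 1"
    and nu: "0 \<le> nu" "nu < 1"
    and cond1: "(1 - r) * (1 - 2 * eta) + r * ((1 - eta) * bpos * (1 - 2 * nu) - eta * bneg) > 0"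
    and cond2: "(1 - r) * (1 - 2 * eta) + r * ((1 - eta) * bneg - (1 - 2 * nu) * bpos * eta) > 0"
  shows "EO_biased r eta bpos bneg nu DA DB hsA hsB hsA hsB
    \<and> (\<forall>hA hB. hA \<in> measurable DA (count_space UNIV) \<and> hB \<in> measurable DB (count_space UNIV)
        \<and> EO_biased r eta bpos bneg nu DA DB hsA hsB hA hB
        \<longrightarrow> biased_error r eta bpos bneg nu DA DB hsA hsB hsA hsB
            \<le> biased_error r eta bpos bneg nu DA DB hsA hsB hA hB)"
proof -
  interpret biased_sampling r eta bpos bneg nu DA DB hsA hsB
    by (rule biased_sampling.intro)
      (fact DA DB hsA_meas hsB_meas r eta bpos(1) bneg(1) nu p_eq p_pos)+
  show ?thesis
    using EO_biased_target target_minimises_biased_error_under_EO[OF cond1 cond2] by blast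
qed

end
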